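(* (i) Let $p\ge 1/4$. Then for all $r\in(0,1)$, $$\frac\pi2(1-r)^p<K(r)<\frac{\pi}{2(1-r)^p}.$$ (ii) Let $p\in(0,1/4)$ and let $x_p$ be the unique zero in $(0,1)$ of $E(x)+((1-2p)x-1)K(x)$. Then for all $r\in(0,x_p)$, $$\frac{\pi}{2(1-r)^p}<K(r)<\frac{(1-x_p)^pK(x_p)}{(1-r)^p}.$$
   Context: $K(x)={\cal K}(\sqrt x)$ and $E(x)={\cal E}(\sqrt x)$ for $x\in[0,1)$, where ${\cal K}(r)=\int_0^{\pi/2}(1-r^2\sin^2t)^{-1/2}dt$ and ${\cal E}(r)=\int_0^{\pi/2}(1-r^2\sin^2t)^{1/2}dt$ are the complete elliptic integrals of the first and second kind. *)

theory Defs
  imports "HOL-Analysis.Analysis"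
begin

text \<open>Complete elliptic integrals in the parameter x = r^2:
  K(x) = int_0^{pi/2} (1 - x sin^2 t)^(-1/2) dt,  E(x) = int_0^{pi/2} (1 - x sin^2 t)^(1/2) dt,
  for x in [0,1).\<close>

definition ellK :: "real \<Rightarrow> real" where
  "ellK x = integral {0..pi/2} (\<lambda>t. 1 / sqrt (1 - x * (sin t)\<^sup>2))"

definition ellE :: "real \<Rightarrow> real" where
  "ellE x = integral {0..pi/2} (\<lambda>t. sqrt (1 - x * (sin t)\<^sup>2))"

end

theory Submission
  imports Defs
begin

text \<open>
  Write \<open>D = 1 - x sin\<^sup>2 t\<close>. For (i), \<open>K(x) \<ge> pi/2\<close> since \<open>D \<le> 1\<close>; for the upper bound put
  \<open>m = (1 - x) powr (1/4)\<close> and integrate the AM-GM inequality \<open>1/sqrt D \<le> (m/D + 1/m)/2\<close>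
  using \<open>\<integral> dt/D = pi/(2 sqrt (1 - x))\<close> over \<open>[0, pi/2]\<close>: this gives
  \<open>K(x) < pi/(2 (1 - x) powr (1/4))\<close>, and \<open>(1 - x) powr p\<close> decreases in \<open>p\<close>.

  For (ii), the derivative of \<open>(1 - x) powr p * K(x)\<close> has the sign of \<open>h(x) = (1 - x) K'(x) - p K(x)\<close>,
  and the Legendre-type relation \<open>E - (1 - x) K = 2 x (1 - x) K'\<close> turns \<open>2 x h(x)\<close> into
  \<open>E(x) + ((1 - 2p) x - 1) K(x)\<close>. Since \<open>h(0) = pi (1 - 4p)/8 > 0\<close> and \<open>h\<close> has no zero before
  \<open>x\<^sub>p\<close>, the function \<open>(1 - x) powr p * K(x)\<close> increases strictly on \<open>[0, x\<^sub>p]\<close>, from \<open>pi/2\<close>.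
\<close>

lemma elliptic_radicand_pos:
  fixes x :: real
  assumes "x < 1"
  shows "0 < 1 - x * (sin t)\<^sup>2"
proof -
  have "x * (sin t)\<^sup>2 \<le> max x 0"
    by (cases "x \<le> 0") (auto simp: mult_nonpos_nonneg abs_square_le_1 intro: mult_left_le)
  then show ?thesis
    using assms by linarith
qed

lemma elliptic_radicand_neq_1: "(x::real) < 1 \<Longrightarrow> x * (sin t)\<^sup>2 \<noteq> 1"
  using elliptic_radicand_pos[of x t] by simp

definition ellK' :: "real \<Rightarrow> real" where
  "ellK' x = integral {0..pi/2}
     (\<lambda>t. (sin t)\<^sup>2 / (2 * (1 - x * (sin t)\<^sup>2) * sqrt (1 - x * (sin t)\<^sup>2)))"

lemma has_integral_ellK:
  "x < 1 \<Longrightarrow> ((\<lambda>t. 1 / sqrt (1 - x * (sin t)\<^sup>2)) has_integral ellK x) {0..pi/2}"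
  unfolding ellK_def
  by (intro integrable_integral integrable_continuous_real continuous_intros)
    (simp add: elliptic_radicand_neq_1)

lemma has_integral_ellE:
  "((\<lambda>t. sqrt (1 - x * (sin t)\<^sup>2)) has_integral ellE x) {0..pi/2}"
  unfolding ellE_def
  by (intro integrable_integral integrable_continuous_real continuous_intros)

lemma has_integral_ellK':
  "x < 1 \<Longrightarrow> ((\<lambda>t. (sin t)\<^sup>2 / (2 * (1 - x * (sin t)\<^sup>2) * sqrt (1 - x * (sin t)\<^sup>2)))
     has_integral ellK' x) {0..pi/2}"
  unfolding ellK'_def
  by (intro integrable_integral integrable_continuous_real continuous_intros)
    (simp add: elliptic_radicand_neq_1)

lemma ellK_has_real_derivative:
  assumes "x < 1"
  shows "(ellK has_real_derivative ellK' x) (at x)"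
proof -
  have "((\<lambda>x. integral (cbox 0 (pi/2)) (\<lambda>t. 1 / sqrt (1 - x * (sin t)\<^sup>2))) has_field_derivative
      integral (cbox 0 (pi/2))
        (\<lambda>t. (sin t)\<^sup>2 / (2 * (1 - x * (sin t)\<^sup>2) * sqrt (1 - x * (sin t)\<^sup>2))))
      (at x within {..<1})"
  proof (rule leibniz_rule_field_derivative)
    fix y t :: real
    assume "y \<in> {..<1}"
    then have pos: "0 < 1 - y * (sin t)\<^sup>2"
      using elliptic_radicand_pos[of y t] by simp
    show "((\<lambda>y. 1 / sqrt (1 - y * (sin t)\<^sup>2)) has_field_derivative
        (sin t)\<^sup>2 / (2 * (1 - y * (sin t)\<^sup>2) * sqrt (1 - y * (sin t)\<^sup>2))) (at y within {..<1})"
      using pos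
      by (auto intro!: derivative_eq_intros simp: field_simps power2_eq_square)
  next
    show "continuous_on ({..<1} \<times> cbox 0 (pi/2)) (\<lambda>(x, t).
        (sin t)\<^sup>2 / (2 * (1 - x * (sin t)\<^sup>2) * sqrt (1 - x * (sin t)\<^sup>2)))"
      unfolding case_prod_beta
      by (intro continuous_intros) (auto simp: elliptic_radicand_neq_1)
  qed (use assms has_integral_ellK in \<open>auto simp: cbox_interval\<close>)
  then show ?thesis
    using assms
    by (simp add: ellK_def[abs_def] ellK'_def at_within_open[of x "{..<1}"] cbox_interval)
qed

lemma continuous_on_ellK: "continuous_on {..<1} ellK"
  by (intro continuous_at_imp_continuous_on ballI)
    (auto intro: DERIV_isCont[OF ellK_has_real_derivative])

lemma continuous_on_ellK': "continuous_on {..<1} ellK'"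
proof -
  have "continuous_on {..<1} (\<lambda>x. integral (cbox 0 (pi/2))
      (\<lambda>t. (sin t)\<^sup>2 / (2 * (1 - x * (sin t)\<^sup>2) * sqrt (1 - x * (sin t)\<^sup>2))))"
    by (rule integral_continuous_on_param, unfold case_prod_beta, intro continuous_intros)
      (auto simp: elliptic_radicand_neq_1)
  then show ?thesis
    unfolding ellK'_def[abs_def] by (simp add: cbox_interval)
qed

lemma sin_cos_over_sqrt_radicand_has_real_derivative:
  fixes x :: real
  assumes "x < 1"
  shows "((\<lambda>t. x * sin t * cos t / sqrt (1 - x * (sin t)\<^sup>2)) has_real_derivative
     sqrt (1 - x * (sin t)\<^sup>2) - (1 - x) / sqrt (1 - x * (sin t)\<^sup>2)
       - 2 * x * (1 - x) * ((sin t)\<^sup>2 / (2 * (1 - x * (sin t)\<^sup>2) * sqrt (1 - x * (sin t)\<^sup>2))))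
     (at t within S)"
proof -
  have pos: "0 < 1 - x * (sin t)\<^sup>2"
    using elliptic_radicand_pos[OF assms] .
  have "((\<lambda>t. x * sin t * cos t / sqrt (1 - x * (sin t)\<^sup>2)) has_real_derivative
      ((x * cos t * cos t - x * sin t * sin t) * sqrt (1 - x * (sin t)\<^sup>2)
        + x * sin t * cos t * (x * sin t * cos t / sqrt (1 - x * (sin t)\<^sup>2)))
      / (sqrt (1 - x * (sin t)\<^sup>2))\<^sup>2) (at t within S)"
    using pos
    apply -
    apply (rule derivative_eq_intros refl | simp add: elliptic_radicand_neq_1 assms)+
    apply (simp add: field_simps power2_eq_square)
    done
  moreover have "((x * c * c - x * s * s) * q + x * s * c * (x * s * c / q)) / q\<^sup>2
      = q - (1 - x) / q - 2 * x * (1 - x) * (s\<^sup>2 / (2 * (1 - x * s\<^sup>2) * q))"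
    if "q > 0" "q\<^sup>2 = 1 - x * s\<^sup>2" "c\<^sup>2 + s\<^sup>2 = 1" for s c q :: real
    using that(1) unfolding that(2)[symmetric]
    apply (simp add: field_simps)
    using that(2,3) by algebra
  ultimately show ?thesis
    using pos by simp
qed

lemma ellE_minus_ellK:
  assumes "x < 1"
  shows "ellE x - (1 - x) * ellK x = 2 * x * (1 - x) * ellK' x"
proof -
  let ?F = "\<lambda>t. x * sin t * cos t / sqrt (1 - x * (sin t)\<^sup>2)"
  have "((\<lambda>t. sqrt (1 - x * (sin t)\<^sup>2) - (1 - x) / sqrt (1 - x * (sin t)\<^sup>2)
       - 2 * x * (1 - x) * ((sin t)\<^sup>2 / (2 * (1 - x * (sin t)\<^sup>2) * sqrt (1 - x * (sin t)\<^sup>2))))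
      has_integral ?F (pi/2) - ?F 0) {0..pi/2}"
    by (rule fundamental_theorem_of_calculus[OF _ sin_cos_over_sqrt_radicand_has_real_derivative
        [OF assms, unfolded has_real_derivative_iff_has_vector_derivative]]) simp
  moreover have "((\<lambda>t. sqrt (1 - x * (sin t)\<^sup>2) - (1 - x) / sqrt (1 - x * (sin t)\<^sup>2)
       - 2 * x * (1 - x) * ((sin t)\<^sup>2 / (2 * (1 - x * (sin t)\<^sup>2) * sqrt (1 - x * (sin t)\<^sup>2))))
      has_integral ellE x - (1 - x) * ellK x - 2 * x * (1 - x) * ellK' x) {0..pi/2}"
    using has_integral_diff[OF has_integral_diff[OF has_integral_ellE
        has_integral_mult_right[OF has_integral_ellK[OF assms], of "1 - x"]]
        has_integral_mult_right[OF has_integral_ellK'[OF assms], of "2 * x * (1 - x)"]]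
    by simp
  ultimately have "?F (pi/2) - ?F 0 = ellE x - (1 - x) * ellK x - 2 * x * (1 - x) * ellK' x"
    by (rule has_integral_unique)
  then show ?thesis
    by simp
qed

lemma ellK_0: "ellK 0 = pi/2"
  unfolding ellK_def by simp

lemma ellK'_0: "ellK' 0 = pi/8"
proof -
  have "((\<lambda>t. (sin t)\<^sup>2 / 2) has_integral
      (\<lambda>t. (t - sin t * cos t) / 4) (pi/2) - (\<lambda>t. (t - sin t * cos t) / 4) 0) {0..pi/2}"
  proof (rule fundamental_theorem_of_calculus)
    fix t :: real
    show "((\<lambda>t. (t - sin t * cos t) / 4) has_vector_derivative (sin t)\<^sup>2 / 2)
        (at t within {0..pi/2})"
      unfolding has_real_derivative_iff_has_vector_derivative[symmetric]
      by (auto intro!: derivative_eq_intros simp: power2_eq_square field_simps)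
        (use sin_cos_squared_add3[of t] in algebra)
  qed simp
  then have "((\<lambda>t. (sin t)\<^sup>2 / 2) has_integral pi/8) {0..pi/2}"
    by simp
  then have "integral {0..pi/2} (\<lambda>t. (sin t)\<^sup>2 / 2) = pi/8"
    by (rule integral_unique)
  moreover have "ellK' 0 = integral {0..pi/2} (\<lambda>t. (sin t)\<^sup>2 / 2)"
    unfolding ellK'_def by simp
  ultimately show ?thesis
    by simp
qed

lemma ellK_ge_pi_half:
  assumes "0 \<le> x" "x < 1"
  shows "pi/2 \<le> ellK x"
proof -
  have "integral {0..pi/2} (\<lambda>t. 1) \<le> integral {0..pi/2} (\<lambda>t. 1 / sqrt (1 - x * (sin t)\<^sup>2))"
  proof (rule integral_le)
    fix t :: real
    have "0 < 1 - x * (sin t)\<^sup>2" "1 - x * (sin t)\<^sup>2 \<le> 1"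
      using elliptic_radicand_pos[OF assms(2)] assms by auto
    then show "1 \<le> 1 / sqrt (1 - x * (sin t)\<^sup>2)"
      by (simp add: field_simps)
  qed (use has_integral_ellK[OF assms(2)] in auto)
  then show ?thesis
    unfolding ellK_def by simp
qed

text \<open>
  The antiderivative below is \<open>arctan (b tan t) / b\<close>, rewritten by the subtraction formula for
  \<open>tan\<close> into a form that is smooth across \<open>t = \<pi>/2\<close>.
\<close>

lemma arctan_antiderivative_has_real_derivative:
  fixes b :: real
  assumes "b > 0"
  shows "((\<lambda>t. (t + arctan ((b - 1) * sin t * cos t / ((cos t)\<^sup>2 + b * (sin t)\<^sup>2))) / b)
     has_real_derivative 1 / ((cos t)\<^sup>2 + b\<^sup>2 * (sin t)\<^sup>2)) (at t within S)"
proof -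
  define P where "P = (cos t)\<^sup>2 + b * (sin t)\<^sup>2"
  define Q where "Q = (cos t)\<^sup>2 + b\<^sup>2 * (sin t)\<^sup>2"
  define N where "N = (b - 1) * (((cos t)\<^sup>2 - (sin t)\<^sup>2) * P - 2 * (b - 1) * (sin t)\<^sup>2 * (cos t)\<^sup>2)"
  have cs: "(cos t)\<^sup>2 + (sin t)\<^sup>2 = 1"
    by simp
  have "P > 0" "Q > 0"
    unfolding P_def Q_def using assms cs
    by (smt (verit) mult_pos_pos zero_le_power2 zero_less_power2 power2_eq_square mult_nonneg_nonneg)+
  have "((\<lambda>t. (b - 1) * sin t * cos t / ((cos t)\<^sup>2 + b * (sin t)\<^sup>2)) has_real_derivative N / P\<^sup>2)
      (at t within S)"
    using \<open>P > 0\<close> unfolding N_def P_def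
    apply -
    apply (rule derivative_eq_intros refl | simp)+
    apply (simp add: power2_eq_square algebra_simps)
    done
  from DERIV_cdivide[OF DERIV_add[OF DERIV_ident DERIV_chain2[OF DERIV_arctan this]], of b]
  have "((\<lambda>t. (t + arctan ((b - 1) * sin t * cos t / ((cos t)\<^sup>2 + b * (sin t)\<^sup>2))) / b)
      has_real_derivative (1 + inverse (1 + ((b - 1) * sin t * cos t / P)\<^sup>2) * (N / P\<^sup>2)) / b)
      (at t within S)"
    unfolding P_def .
  moreover have "(1 + inverse (1 + ((b - 1) * sin t * cos t / P)\<^sup>2) * (N / P\<^sup>2)) / b = 1 / Q"
  proof -
    have "P\<^sup>2 + ((b - 1) * sin t * cos t)\<^sup>2 = Q" "Q + N = b"
      unfolding P_def Q_def N_def using cs by algebra+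
    then show ?thesis
      using \<open>P > 0\<close> \<open>Q > 0\<close> assms by (simp add: field_simps power2_eq_square)
  qed
  ultimately show ?thesis
    unfolding Q_def by simp
qed

lemma has_integral_inverse_cos2_plus_sin2:
  fixes b :: real
  assumes "b > 0"
  shows "((\<lambda>t. 1 / ((cos t)\<^sup>2 + b\<^sup>2 * (sin t)\<^sup>2)) has_integral pi / (2 * b)) {0..pi/2}"
proof -
  let ?G = "\<lambda>t. (t + arctan ((b - 1) * sin t * cos t / ((cos t)\<^sup>2 + b * (sin t)\<^sup>2))) / b"
  have "((\<lambda>t. 1 / ((cos t)\<^sup>2 + b\<^sup>2 * (sin t)\<^sup>2)) has_integral ?G (pi/2) - ?G 0) {0..pi/2}"
    by (rule fundamental_theorem_of_calculus[OF _ arctan_antiderivative_has_real_derivative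
        [OF assms, unfolded has_real_derivative_iff_has_vector_derivative]]) simp
  then show ?thesis
    by simp
qed

lemma has_integral_inverse_elliptic_radicand:
  fixes x :: real
  assumes "x < 1"
  shows "((\<lambda>t. 1 / (1 - x * (sin t)\<^sup>2)) has_integral pi / (2 * sqrt (1 - x))) {0..pi/2}"
proof -
  have "1 - x * (sin t)\<^sup>2 = (cos t)\<^sup>2 + (sqrt (1 - x))\<^sup>2 * (sin t)\<^sup>2" for t
    using assms sin_cos_squared_add[of t] by (simp add: algebra_simps)
  then show ?thesis
    using has_integral_inverse_cos2_plus_sin2[of "sqrt (1 - x)"] assms by simp
qed

lemma ellK_less_quarter_power:
  fixes x :: real
  assumes "x < 1" "x \<noteq> 0"
  shows "ellK x < pi / (2 * (1 - x) powr (1/4))"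
proof -
  define m where "m = (1 - x) powr (1/4)"
  have "m > 0" "m \<noteq> 1"
    using assms by (auto simp: m_def)
  have m_sq: "sqrt (1 - x) = m\<^sup>2"
    using assms by (simp add: m_def powr_power powr_half_sqrt)
  define \<phi> where "\<phi> = (\<lambda>t. (m * (1 / (1 - x * (sin t)\<^sup>2)) + 1 / m) * (1/2) - 1 / sqrt (1 - x * (sin t)\<^sup>2))"
  have am_gm: "(m * (1 / q\<^sup>2) + 1 / m) * (1/2) - 1 / q = (m / q - 1)\<^sup>2 / (2 * m)" if "q > 0" for q
    using that \<open>m > 0\<close> by (simp add: field_simps power2_eq_square)
  have \<phi>_eq: "\<phi> t = (m / sqrt (1 - x * (sin t)\<^sup>2) - 1)\<^sup>2 / (2 * m)" for t
    using am_gm[of "sqrt (1 - x * (sin t)\<^sup>2)"] elliptic_radicand_pos[OF assms(1), of t]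
    by (simp add: \<phi>_def)
  have "(\<phi> has_integral (m * (pi / (2 * m\<^sup>2)) + pi / 2 * (1 / m)) * (1/2) - ellK x) {0..pi/2}"
    unfolding \<phi>_def m_sq[symmetric]
    using has_integral_const_real[of "1 / m" 0 "pi/2"]
    by (intro has_integral_diff has_integral_mult_left has_integral_add has_integral_mult_right
        has_integral_ellK has_integral_inverse_elliptic_radicand assms(1)) simp
  also have "(m * (pi / (2 * m\<^sup>2)) + pi / 2 * (1 / m)) * (1/2) = pi / (2 * m)"
    using \<open>m > 0\<close> by (simp add: field_simps power2_eq_square)
  finally have \<phi>_integral: "(\<phi> has_integral pi / (2 * m) - ellK x) {0..pi/2}" .
  have \<phi>_nonneg: "\<phi> t \<ge> 0" for t
    unfolding \<phi>_eq using \<open>m > 0\<close> by simp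
  have "continuous_on {0..pi/2} \<phi>"
    unfolding \<phi>_def using assms(1) \<open>m > 0\<close>
    by (intro continuous_intros) (auto simp: elliptic_radicand_neq_1)
  then have "integral {0..pi/2} \<phi> = 0 \<longleftrightarrow> (\<forall>t\<in>{0..pi/2}. \<phi> t = 0)"
    using \<phi>_nonneg by (intro integral_eq_0_iff) auto
  moreover have "\<phi> 0 \<noteq> 0"
    unfolding \<phi>_eq using \<open>m > 0\<close> \<open>m \<noteq> 1\<close> by simp
  ultimately have "pi / (2 * m) - ellK x \<noteq> 0"
    using \<phi>_integral integral_unique by force
  moreover have "pi / (2 * m) - ellK x \<ge> 0"
    using \<phi>_integral \<phi>_nonneg by (rule has_integral_nonneg)
  ultimately show ?thesis
    unfolding m_def[symmetric] by linarith
qed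

lemma weighted_ellK_has_real_derivative:
  assumes "x < 1"
  shows "((\<lambda>x. (1 - x) powr p * ellK x) has_real_derivative
     (1 - x) powr (p - 1) * ((1 - x) * ellK' x - p * ellK x)) (at x)"
proof -
  have split: "(1 - x) powr p = (1 - x) powr (p - 1) * (1 - x)"
    using assms by (simp add: powr_diff)
  have "((\<lambda>x. (1 - x) powr p) has_real_derivative p * (1 - x) powr (p - of_nat 1) * (-1)) (at x)"
    by (rule DERIV_fun_powr) (auto intro!: derivative_eq_intros simp: assms)
  from DERIV_mult[OF this ellK_has_real_derivative[OF assms]]
  show ?thesis
    by (rule DERIV_cong) (unfold split, simp add: algebra_simps)
qed

lemma weighted_ellK_strict_mono_on:
  fixes p a :: real
  assumes "p < 1/4" "a < 1"
    and no_zero: "\<And>y. 0 < y \<Longrightarrow> y < a \<Longrightarrow> ellE y + ((1 - 2 * p) * y - 1) * ellK y \<noteq> 0"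
  shows "strict_mono_on {0..a} (\<lambda>x. (1 - x) powr p * ellK x)"
proof -
  define h where "h x = (1 - x) * ellK' x - p * ellK x" for x
  have zero_iff: "ellE y + ((1 - 2 * p) * y - 1) * ellK y = 2 * y * h y" if "y < 1" for y
    using ellE_minus_ellK[OF that] by (simp add: h_def algebra_simps)
  have "continuous_on {..<1} h"
    unfolding h_def[abs_def] by (intro continuous_intros continuous_on_ellK continuous_on_ellK')
  have "h 0 > 0"
    using assms(1) by (simp add: h_def ellK_0 ellK'_0)
  have h_pos: "h y > 0" if y: "0 \<le> y" "y < a" for y
  proof (rule ccontr)
    assume "\<not> h y > 0"
    moreover have "continuous_on {0..y} h"
      by (rule continuous_on_subset[OF \<open>continuous_on {..<1} h\<close>]) (use y assms(2) in auto)
    ultimately obtain c where "0 \<le> c" "c \<le> y" "h c = 0"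
      using IVT2'[of h y 0 0] \<open>h 0 > 0\<close> y by force
    then show False
      using no_zero[of c] zero_iff[of c] \<open>h 0 > 0\<close> y assms(2) by (cases "c = 0") auto
  qed
  show ?thesis
  proof (rule strict_mono_onI)
    fix u v
    assume "u \<in> {0..a}" "v \<in> {0..a}" "u < v"
    show "(1 - u) powr p * ellK u < (1 - v) powr p * ellK v"
    proof (rule DERIV_pos_imp_increasing_open[OF \<open>u < v\<close>])
      fix y
      assume "u < y" "y < v"
      then show "\<exists>D. ((\<lambda>x. (1 - x) powr p * ellK x) has_real_derivative D) (at y) \<and> D > 0"
        using weighted_ellK_has_real_derivative[of y p] h_pos[of y] \<open>u \<in> {0..a}\<close> \<open>v \<in> {0..a}\<close>
          assms(2) by (auto simp: h_def)
    next
      show "continuous_on {u..v} (\<lambda>x. (1 - x) powr p * ellK x)"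
        using \<open>v \<in> {0..a}\<close> assms(2)
        by (intro continuous_at_imp_continuous_on ballI)
          (auto intro!: DERIV_isCont[OF weighted_ellK_has_real_derivative])
    qed
  qed
qed

theorem mainTheorem16:
  shows "(\<forall>p::real. p \<ge> 1/4 \<longrightarrow>
            (\<forall>r::real. 0 < r \<and> r < 1 \<longrightarrow>
               pi / 2 * (1 - r) powr p < ellK r \<and> ellK r < pi / (2 * (1 - r) powr p)))
       \<and> (\<forall>p xp :: real. 0 < p \<and> p < 1/4 \<and> 0 < xp \<and> xp < 1
            \<and> ellE xp + ((1 - 2*p) * xp - 1) * ellK xp = 0
            \<and> (\<forall>y. 0 < y \<and> y < 1 \<and> ellE y + ((1 - 2*p) * y - 1) * ellK y = 0 \<longrightarrow> y = xp)
            \<longrightarrow> (\<forall>r::real. 0 < r \<and> r < xp \<longrightarrow>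
                   pi / (2 * (1 - r) powr p) < ellK r \<and>
                   ellK r < (1 - xp) powr p * ellK xp / (1 - r) powr p))"
proof (intro conjI allI impI; elim conjE)
  fix p r :: real
  assume "p \<ge> 1/4" "0 < r" "r < 1"
  then have "(1 - r) powr p < 1" "(1 - r) powr p \<le> (1 - r) powr (1/4)"
    using powr_less_mono2[of p "1 - r" 1] powr_mono'[of "1/4" p "1 - r"] by auto
  have "pi / 2 * (1 - r) powr p < pi / 2"
    using \<open>(1 - r) powr p < 1\<close> by simp
  also have "\<dots> \<le> ellK r"
    using ellK_ge_pi_half \<open>0 < r\<close> \<open>r < 1\<close> by simp
  finally show "pi / 2 * (1 - r) powr p < ellK r" .
  have "ellK r < pi / (2 * (1 - r) powr (1/4))"
    using ellK_less_quarter_power \<open>0 < r\<close> \<open>r < 1\<close> by simp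
  also have "\<dots> \<le> pi / (2 * (1 - r) powr p)"
    using \<open>(1 - r) powr p \<le> (1 - r) powr (1/4)\<close> \<open>r < 1\<close> by (simp add: frac_le)
  finally show "ellK r < pi / (2 * (1 - r) powr p)" .
next
  fix p xp r :: real
  assume "0 < p" "p < 1/4" "0 < xp" "xp < 1" "0 < r" "r < xp"
    and unique: "\<forall>y. 0 < y \<and> y < 1 \<and> ellE y + ((1 - 2*p) * y - 1) * ellK y = 0 \<longrightarrow> y = xp"
  have mono: "strict_mono_on {0..xp} (\<lambda>x. (1 - x) powr p * ellK x)"
    using unique \<open>p < 1/4\<close> \<open>xp < 1\<close> by (intro weighted_ellK_strict_mono_on) force+
  have "(1 - 0) powr p * ellK 0 < (1 - r) powr p * ellK r"
    using \<open>0 < r\<close> \<open>r < xp\<close> by (intro strict_mono_onD[OF mono]) auto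
  moreover have "(1 - r) powr p * ellK r < (1 - xp) powr p * ellK xp"
    using \<open>0 < r\<close> \<open>r < xp\<close> by (intro strict_mono_onD[OF mono]) auto
  ultimately show "pi / (2 * (1 - r) powr p) < ellK r"
    "ellK r < (1 - xp) powr p * ellK xp / (1 - r) powr p"
    using \<open>r < xp\<close> \<open>xp < 1\<close> by (simp_all add: ellK_0 field_simps)
qed

end
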